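(* Let $N\ge 2$ and $A,B,C>0$ with $B>(N-1)C$, and define $D_i^N(p_1,\ldots,p_N)=A-Bp_i+C\sum_{j\ne i}p_j$ for $i=1,\ldots,N$. Define lower-level demand functions recursively by $D_i^n(p_1,\ldots,p_n)=D_i^{n+1}(p_1,\ldots,p_n,\hat p_{n+1})$ for $i\le n$, where $\hat p_{n+1}(p_1,\ldots,p_n)$ solves $D^{n+1}_{n+1}(p_1,\ldots,p_n,\hat p_{n+1})=0$. Then for each $n\in\{1,\ldots,N-1\}$, $$D_i^n(p_1,\ldots,p_n)=a_n-b_np_i+c_n\sum_{j\le n,\,j\ne i}p_j,\qquad i=1,\ldots,n,$$ where $a_N=A$, $b_N=B$, $c_N=C$ and, for $2\le n\le N$, $$a_{n-1}=a_n\Big(1+\frac{c_n}{b_n}\Big),\quad b_{n-1}=b_n\Big(1-\frac{c_n^2}{b_n^2}\Big),\quad c_{n-1}=c_n\Big(1+\frac{c_n}{b_n}\Big).$$ *)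

theory Defs
  imports Complex_Main
begin

text \<open>Prices are vectors p :: nat => real, of which only the entries p 1, ..., p n
  matter at level n.  demK N A B C k i p is the demand function of firm i at level N - k:
  level N is the top-level linear demand; level n is obtained from level n+1 by
  substituting p (n+1) := phat, where phat is the (THE) solution x of
  D^(n+1)_(n+1)(p_1,...,p_n,x) = 0.\<close>

primrec demK :: "nat \<Rightarrow> real \<Rightarrow> real \<Rightarrow> real \<Rightarrow> nat \<Rightarrow> nat \<Rightarrow> (nat \<Rightarrow> real) \<Rightarrow> real" where
  "demK N A B C 0 i p = A - B * p i + C * (\<Sum>j\<in>{1..N} - {i}. p j)"
| "demK N A B C (Suc k) i p =
     demK N A B C k i (p(N - k := (THE x. demK N A B C k (N - k) (p(N - k := x)) = 0)))"

definition demand :: "nat \<Rightarrow> real \<Rightarrow> real \<Rightarrow> real \<Rightarrow> nat \<Rightarrow> nat \<Rightarrow> (nat \<Rightarrow> real) \<Rightarrow> real" where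
  "demand N A B C n i p = demK N A B C (N - n) i p"

primrec coefK :: "real \<Rightarrow> real \<Rightarrow> real \<Rightarrow> nat \<Rightarrow> real \<times> real \<times> real" where
  "coefK A B C 0 = (A, B, C)"
| "coefK A B C (Suc k) =
     (case coefK A B C k of (a, b, c) \<Rightarrow>
        (a * (1 + c / b), b * (1 - c\<^sup>2 / b\<^sup>2), c * (1 + c / b)))"

definition coef_a :: "nat \<Rightarrow> real \<Rightarrow> real \<Rightarrow> real \<Rightarrow> nat \<Rightarrow> real" where
  "coef_a N A B C n = fst (coefK A B C (N - n))"
definition coef_b :: "nat \<Rightarrow> real \<Rightarrow> real \<Rightarrow> real \<Rightarrow> nat \<Rightarrow> real" where
  "coef_b N A B C n = fst (snd (coefK A B C (N - n)))"
definition coef_c :: "nat \<Rightarrow> real \<Rightarrow> real \<Rightarrow> real \<Rightarrow> nat \<Rightarrow> real" where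
  "coef_c N A B C n = snd (snd (coefK A B C (N - n)))"

end

theory Submission
  imports Defs
begin

text \<open>Setting the last
  firm's demand to zero and solving for its price gives
  \<open>\<hat>p = (a + c \<Sigma>) / b\<close>, with \<open>\<Sigma>\<close> the sum of the remaining prices; substituting
  this back yields a linear system in one price fewer whose coefficients are the images
  of \<open>(a, b, c)\<close> under the stated recursion. The hypothesis \<open>B > (N - 1) C\<close> guarantees
  that the own-price coefficient stays positive (in fact \<open>b > (n - 1) c\<close> at level \<open>n\<close>),
  so the equation for \<open>\<hat>p\<close> is always uniquely solvable.\<close>

definition linear_demand :: "nat \<Rightarrow> real \<Rightarrow> real \<Rightarrow> real \<Rightarrow> nat \<Rightarrow> (nat \<Rightarrow> real) \<Rightarrow> real" where
  "linear_demand m a b c i p = a - b * p i + c * (\<Sum>j\<in>{1..m} - {i}. p j)"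

lemma linear_demand_last:
  "linear_demand m a b c m (p(m := x)) = a - b * x + c * (\<Sum>j\<in>{1..m-1}. p j)"
proof -
  have "{1..m} - {m} = {1..m-1}" by auto
  moreover have "(\<Sum>j\<in>{1..m-1}. (p(m := x)) j) = (\<Sum>j\<in>{1..m-1}. p j)"
    by (rule sum.cong) auto
  ultimately show ?thesis
    unfolding linear_demand_def by simp
qed

lemma linear_demand_last_root:
  assumes "b \<noteq> 0"
  shows "(THE x. linear_demand m a b c m (p(m := x)) = 0) = (a + c * (\<Sum>j\<in>{1..m-1}. p j)) / b"
  using assms unfolding linear_demand_last by (intro the_equality) (auto simp: field_simps)

lemma linear_demand_eliminate_last:
  assumes "b \<noteq> 0" and "1 \<le> i" and "i < m"
  shows "linear_demand m a b c i (p(m := (a + c * (\<Sum>j\<in>{1..m-1}. p j)) / b)) =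
         linear_demand (m - 1) (a * (1 + c / b)) (b * (1 - c\<^sup>2 / b\<^sup>2)) (c * (1 + c / b)) i p"
proof -
  define S where "S = (\<Sum>j\<in>{1..m-1} - {i}. p j)"
  have others: "{1..m} - {i} = insert m ({1..m-1} - {i})" using assms by auto
  have "(\<Sum>j\<in>{1..m} - {i}. (p(m := x)) j) = x + S" for x
    unfolding others S_def using assms by (subst sum.insert) (auto intro!: sum.cong split: if_splits)
  moreover have "(\<Sum>j\<in>{1..m-1}. p j) = p i + S"
    unfolding S_def using assms by (subst sum.remove[of _ i]) auto
  moreover have "a - b * p i + c * ((a + c * (p i + S)) / b + S) =
      a * (1 + c / b) - b * (1 - c\<^sup>2 / b\<^sup>2) * p i + c * (1 + c / b) * S"
    using assms by (simp add: field_simps power2_eq_square)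
  ultimately show ?thesis
    using assms unfolding linear_demand_def S_def[symmetric] by simp
qed

lemma reduced_coefficients_dominance:
  fixes b c :: real
  assumes "0 < c" and "real (r + 1) * c < b"
  shows "0 < c * (1 + c / b)" and "real r * (c * (1 + c / b)) < b * (1 - c\<^sup>2 / b\<^sup>2)"
proof -
  have "0 \<le> real r * c" using assms by simp
  moreover have "real (r + 1) * c = real r * c + c" by (simp add: algebra_simps)
  ultimately have "c < b" using assms by linarith
  then have ratio: "0 < 1 + c / b" using assms by (simp add: add_pos_pos)
  then show "0 < c * (1 + c / b)" using assms by simp
  have "b * (1 - c\<^sup>2 / b\<^sup>2) = (b - c) * (1 + c / b)"
    using \<open>c < b\<close> assms by (simp add: field_simps power2_eq_square)
  moreover have "real r * c < b - c" using assms by (simp add: algebra_simps)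
  ultimately show "real r * (c * (1 + c / b)) < b * (1 - c\<^sup>2 / b\<^sup>2)"
    using ratio by (simp add: mult.assoc[symmetric] mult_strict_right_mono)
qed

lemma coefK_dominance:
  assumes "C > 0" and "B > real (N - 1) * C" and "k \<le> N - 1"
  shows "case coefK A B C k of (a, b, c) \<Rightarrow> c > 0 \<and> b > real (N - 1 - k) * c"
  using assms(3)
proof (induction k)
  case 0
  then show ?case using assms by simp
next
  case (Suc k)
  obtain a b c where abc: "coefK A B C k = (a, b, c)" by (metis prod.exhaust)
  with Suc have "c > 0" and "real (N - 1 - Suc k + 1) * c < b"
    by (auto simp: Suc_diff_Suc)
  then show ?case using reduced_coefficients_dominance abc by simp
qed

lemma demK_linear:
  assumes "C > 0" and "B > real (N - 1) * C" and "k \<le> N - 1"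
    and "1 \<le> i" and "i \<le> N - k"
  shows "demK N A B C k i p = (case coefK A B C k of (a, b, c) \<Rightarrow> linear_demand (N - k) a b c i p)"
  using assms(3-5)
proof (induction k arbitrary: i p)
  case 0
  then show ?case by (simp add: linear_demand_def)
next
  case (Suc k)
  obtain a b c where abc: "coefK A B C k = (a, b, c)" by (metis prod.exhaust)
  have "c > 0" and "real (N - 1 - k) * c < b"
    using coefK_dominance[OF assms(1,2), of k A] Suc.prems abc by auto
  moreover have "0 \<le> real (N - 1 - k) * c" using \<open>c > 0\<close> by simp
  ultimately have "b > 0" by linarith
  define m where "m = N - k"
  have level: "N - Suc k = m - 1" and "i < m" using Suc.prems m_def by auto
  have last: "demK N A B C k m (p(m := x)) = linear_demand m a b c m (p(m := x))" for x
    using Suc.IH[of m] Suc.prems abc m_def by simp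
  have "demK N A B C (Suc k) i p =
        demK N A B C k i (p(m := (a + c * (\<Sum>j\<in>{1..m-1}. p j)) / b))"
    using linear_demand_last_root[OF \<open>b > 0\<close>[THEN less_imp_neq, symmetric]]
    by (simp add: m_def[symmetric] last)
  also have "\<dots> = linear_demand m a b c i (p(m := (a + c * (\<Sum>j\<in>{1..m-1}. p j)) / b))"
    using Suc.IH Suc.prems abc m_def by simp
  also have "\<dots> = linear_demand (m - 1) (a * (1 + c / b)) (b * (1 - c\<^sup>2 / b\<^sup>2)) (c * (1 + c / b)) i p"
    using linear_demand_eliminate_last \<open>b > 0\<close> Suc.prems \<open>i < m\<close> by simp
  finally show ?case using abc level by simp
qed

theorem proposition2p4:
  fixes N n i :: nat and A B C :: real and p :: "nat \<Rightarrow> real"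
  assumes "N \<ge> 2" and "A > 0" and "B > 0" and "C > 0"
    and "B > real (N - 1) * C"
    and "1 \<le> n" and "n \<le> N - 1"
    and "1 \<le> i" and "i \<le> n"
  shows "demand N A B C n i p =
           coef_a N A B C n - coef_b N A B C n * p i
           + coef_c N A B C n * (\<Sum>j\<in>{1..n} - {i}. p j)"
proof -
  have "N - (N - n) = n" using assms by simp
  then have "demK N A B C (N - n) i p =
      (case coefK A B C (N - n) of (a, b, c) \<Rightarrow> linear_demand n a b c i p)"
    using demK_linear[OF assms(4,5), of "N - n" i A p] assms by simp
  then show ?thesis
    unfolding demand_def coef_a_def coef_b_def coef_c_def linear_demand_def
    by (simp split: prod.splits)
qed

end
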